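(* Let ${\mathbf{X}}\in\mathbb{R}^{m\times n}$ and suppose ${\mathbf{X}}={\mathbf{U}}_0{\mathbf{V}}_0^T$ with ${\mathbf{U}}_0\in\mathbb{R}_+^{m\times r}$, ${\mathbf{V}}_0\in\mathbb{R}_+^{n\times r}$ both of full column rank $r$, where $r\le\min\{m,n\}$. Let ${\mathbf{A}}_1\in\mathbb{R}^{r\times m}$ and ${\mathbf{A}}_2\in\mathbb{R}^{n\times r}$ be such that the $r\times r$ matrix ${\mathbf{A}}_1{\mathbf{X}}{\mathbf{A}}_2$ is invertible. Let $\lambda_1,\lambda_2>0$ and let $(\tilde{\mathbf{U}},\tilde{\mathbf{V}})$ be any minimizer, over ${\mathbf{U}}\in\mathbb{R}_+^{m\times r}$, ${\mathbf{V}}\in\mathbb{R}_+^{n\times r}$, of $$\|{\mathbf{A}}_1({\mathbf{X}}-{\mathbf{U}}{\mathbf{V}}^T)\|_F^2+\|({\mathbf{X}}-{\mathbf{U}}{\mathbf{V}}^T){\mathbf{A}}_2\|_F^2+\lambda_1\|({\mathbf{I}}_m-\mathbf{P}_1){\mathbf{U}}{\mathbf{V}}^T\|_F^2+\lambda_2\|{\mathbf{U}}{\mathbf{V}}^T({\mathbf{I}}_n-\mathbf{P}_2)\|_F^2,$$ where $\mathbf{P}_1\in\mathbb{R}^{m\times m}$ is the orthogonal projection onto the column space of ${\mathbf{X}}{\mathbf{A}}_2$ and $\mathbf{P}_2\in\mathbb{R}^{n\times n}$ is the orthogonal projection onto the row space of ${\mathbf{A}}_1{\mathbf{X}}$. Then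 ${\mathbf{X}}=\tilde{\mathbf{U}}\tilde{\mathbf{V}}^T$.
   Context: $\mathbb{R}_+^{a\times b}$ denotes the set of $a\times b$ matrices with all entries nonnegative. $\|\cdot\|_F$ is the Frobenius norm. *)

theory Defs
  imports "HOL-Analysis.Analysis"
begin

definition frob_sq :: "real^'c^'r \<Rightarrow> real" where
  "frob_sq M = (\<Sum>i\<in>UNIV. \<Sum>j\<in>UNIV. (M $ i $ j)^2)"

definition nonneg_mat :: "real^'c^'r \<Rightarrow> bool" where
  "nonneg_mat M \<longleftrightarrow> (\<forall>i j. 0 \<le> M $ i $ j)"

definition orth_proj_mat :: "(real^'n) set \<Rightarrow> real^'n^'n" where
  "orth_proj_mat S = (THE P. \<forall>x. P *v x \<in> S \<and> (\<forall>y\<in>S. inner (x - P *v x) y = 0))"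

definition col_space :: "real^'c^'r \<Rightarrow> (real^'r) set" where
  "col_space M = span (columns M)"

definition row_space :: "real^'c^'r \<Rightarrow> (real^'c) set" where
  "row_space M = span (rows M)"

definition nmf_obj ::
  "real^'n^'m \<Rightarrow> real^'m^'r \<Rightarrow> real^'r^'n \<Rightarrow> real \<Rightarrow> real \<Rightarrow> real^'r^'m \<Rightarrow> real^'r^'n \<Rightarrow> real" where
  "nmf_obj X A1 A2 l1 l2 U V =
     (let P1 = orth_proj_mat (col_space (X ** A2));
          P2 = orth_proj_mat (row_space (A1 ** X));
          W = U ** transpose V
      in frob_sq (A1 ** (X - W)) + frob_sq ((X - W) ** A2)
         + l1 * frob_sq ((mat 1 - P1) ** W) + l2 * frob_sq (W ** (mat 1 - P2)))"

end

theory Submission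
  imports Defs
begin

text \<open>
  Write \<open>B = A\<^sub>1 X A\<^sub>2\<close>. Because \<open>X = U\<^sub>0 V\<^sub>0\<^sup>T\<close> factors through \<open>r\<close> dimensions and the
  \<open>r \<times> r\<close> matrix \<open>B\<close> is invertible, \<open>X = X A\<^sub>2 B\<^sup>-\<^sup>1 A\<^sub>1 X\<close>; hence the columns of \<open>X\<close> lie in the
  column space of \<open>X A\<^sub>2\<close> and its rows in the row space of \<open>A\<^sub>1 X\<close>. So \<open>(U\<^sub>0, V\<^sub>0)\<close> is a
  feasible point where all four terms of the objective vanish, and every minimizer
  \<open>W = \<tilde>U \<tilde>V\<^sup>T\<close> must make them vanish too. The third term puts the columns of \<open>W\<close>, hence
  those of \<open>X - W\<close>, into the column space of \<open>X A\<^sub>2\<close>, say \<open>X - W = X A\<^sub>2 M\<close>; the first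
  term gives \<open>0 = A\<^sub>1 (X - W) = B M\<close>, so \<open>M = 0\<close>.
\<close>

lemma orth_proj_mat_exists:
  fixes T :: "(real^'n) set"
  shows "\<exists>P::real^'n^'n. \<forall>x. P *v x \<in> span T \<and> (\<forall>y\<in>span T. inner (x - P *v x) y = 0)"
proof -
  obtain B where B: "B \<subseteq> span T" "pairwise orthogonal B" "span B = span T"
    using orthogonal_basis_subspace[of "span T"] subspace_span by metis
  define p where "p x = (\<Sum>b\<in>B. (b \<bullet> x / (b \<bullet> b)) *\<^sub>R b)" for x :: "real^'n"
  have lin: "linear p"
    unfolding p_def
    by (auto simp: linear_iff inner_add_right add_divide_distrib scaleR_add_left sum.distrib
        scaleR_sum_right)
  show ?thesis
  proof (intro exI allI conjI ballI)
    fix x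
    show "matrix p *v x \<in> span T"
      unfolding matrix_vector_mul(2)[OF lin] p_def
      using B(1) by (simp add: span_mul span_sum subsetD)
    fix y assume "y \<in> span T"
    hence "orthogonal y (x - p x)"
      using Gram_Schmidt_step[OF B(2), of y x] B(3) by (simp add: p_def)
    thus "inner (x - matrix p *v x) y = 0"
      unfolding matrix_vector_mul(2)[OF lin] by (simp add: orthogonal_def inner_commute)
  qed
qed

lemma orth_proj_mat_span:
  fixes T :: "(real^'n) set"
  shows "orth_proj_mat (span T) *v x \<in> span T"
    and "y \<in> span T \<Longrightarrow> inner (x - orth_proj_mat (span T) *v x) y = 0"
proof -
  let ?is_proj = "\<lambda>P::real^'n^'n. \<forall>x. P *v x \<in> span T \<and> (\<forall>y\<in>span T. inner (x - P *v x) y = 0)"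
  have unique: "P = Q" if "?is_proj P" "?is_proj Q" for P Q
  proof (rule matrix_eq[THEN iffD2], rule allI)
    fix x
    have d: "P *v x - Q *v x \<in> span T"
      using that span_diff by blast
    have "inner (P *v x - Q *v x) (P *v x - Q *v x)
        = inner (x - Q *v x) (P *v x - Q *v x) - inner (x - P *v x) (P *v x - Q *v x)"
      by (simp add: inner_diff_left)
    also have "\<dots> = 0"
      using d that by simp
    finally show "P *v x = Q *v x" by simp
  qed
  have "\<exists>!P. ?is_proj P"
    using orth_proj_mat_exists[of T] unique by blast
  hence "?is_proj (orth_proj_mat (span T))"
    unfolding orth_proj_mat_def by (rule theI')
  thus "orth_proj_mat (span T) *v x \<in> span T"
    and "y \<in> span T \<Longrightarrow> inner (x - orth_proj_mat (span T) *v x) y = 0"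
    by blast+
qed

lemma orth_proj_mat_fixed_iff:
  fixes T :: "(real^'n) set"
  shows "orth_proj_mat (span T) *v y = y \<longleftrightarrow> y \<in> span T"
proof
  assume "y \<in> span T"
  hence "y - orth_proj_mat (span T) *v y \<in> span T"
    using orth_proj_mat_span(1) span_diff by blast
  hence "inner (y - orth_proj_mat (span T) *v y) (y - orth_proj_mat (span T) *v y) = 0"
    by (rule orth_proj_mat_span(2))
  thus "orth_proj_mat (span T) *v y = y" by simp
qed (metis orth_proj_mat_span(1))

lemma symmetric_orth_proj_mat:
  fixes T :: "(real^'n) set"
  shows "transpose (orth_proj_mat (span T)) = orth_proj_mat (span T)"
proof -
  let ?P = "orth_proj_mat (span T)"
  have self_adjoint: "inner (?P *v x) y = inner x (?P *v y)" for x y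
  proof -
    have "inner (y - ?P *v y) (?P *v x) = 0" "inner (x - ?P *v x) (?P *v y) = 0"
      using orth_proj_mat_span by blast+
    thus ?thesis by (simp add: inner_diff_left inner_diff_right inner_commute)
  qed
  have "inner x (transpose ?P *v y - ?P *v y) = 0" for x y
  proof -
    have "inner x (transpose ?P *v y) = inner (?P *v x) y"
      by (metis dot_lmul_matrix inner_commute transpose_matrix_vector)
    thus ?thesis by (simp add: inner_diff_right self_adjoint)
  qed
  hence "transpose ?P *v y = ?P *v y" for y
    by (metis inner_eq_zero_iff right_minus_eq)
  thus ?thesis by (simp add: matrix_eq)
qed

lemma orth_proj_complement_mult_eq_0_iff:
  fixes T :: "(real^'n) set" and M :: "real^'k^'n"
  shows "(mat 1 - orth_proj_mat (span T)) ** M = 0 \<longleftrightarrow> (\<forall>x. M *v x \<in> span T)"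
  unfolding matrix_eq
  by (simp add: matrix_vector_mult_diff_rdistrib eq_commute[of "M *v _"] orth_proj_mat_fixed_iff
      flip: matrix_vector_mul_assoc)

lemma transpose_eq_0_iff: "transpose A = 0 \<longleftrightarrow> A = (0 :: 'a::zero^'n^'m)"
  by (auto simp: transpose_def vec_eq_iff)

lemma transpose_diff: "transpose (A - B) = transpose A - (transpose B :: 'a::ab_group_add^'n^'m)"
  by (simp add: transpose_def vec_eq_iff)

lemma mult_orth_proj_complement_eq_0_iff:
  fixes T :: "(real^'n) set" and M :: "real^'n^'k"
  shows "M ** (mat 1 - orth_proj_mat (span T)) = 0 \<longleftrightarrow> (\<forall>x. transpose M *v x \<in> span T)"
proof -
  have "transpose (mat 1 - orth_proj_mat (span T)) = mat 1 - orth_proj_mat (span T)"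
    by (simp add: transpose_diff symmetric_orth_proj_mat)
  hence "transpose (M ** (mat 1 - orth_proj_mat (span T)))
      = (mat 1 - orth_proj_mat (span T)) ** transpose M"
    by (simp add: matrix_transpose_mul)
  hence "M ** (mat 1 - orth_proj_mat (span T)) = 0
      \<longleftrightarrow> (mat 1 - orth_proj_mat (span T)) ** transpose M = 0"
    by (subst transpose_eq_0_iff[symmetric]) simp
  thus ?thesis
    by (simp only: orth_proj_complement_mult_eq_0_iff)
qed

lemma span_columns_eq_range:
  fixes A :: "real^'n^'m"
  shows "span (columns A) = range ((*v) A)"
proof
  show "span (columns A) \<subseteq> range ((*v) A)"
    by (rule span_minimal)
       (auto simp: columns_image_basis intro!: linear_subspace_image subspace_UNIV)
qed (auto intro: matrix_vector_mult_in_columnspace)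

lemma frob_sq_nonneg: "frob_sq M \<ge> 0"
  unfolding frob_sq_def by (intro sum_nonneg) auto

lemma frob_sq_eq_0_iff: "frob_sq M = 0 \<longleftrightarrow> M = 0"
  unfolding frob_sq_def by (simp add: sum_nonneg sum_nonneg_eq_0_iff vec_eq_iff)

lemma low_rank_reproducing:
  fixes U :: "real^'r^'m" and V :: "real^'r^'n"
    and A1 :: "real^'m^'r" and A2 :: "real^'r^'n" and G :: "real^'r^'r"
  assumes "X = U ** transpose V" and "G ** (A1 ** X ** A2) = mat 1"
  shows "X ** A2 ** G ** (A1 ** X) = X"
proof -
  have "(G ** A1 ** U) ** (transpose V ** A2) = mat 1"
    using assms by (simp add: matrix_mul_assoc)
  hence "(transpose V ** A2) ** (G ** A1 ** U) = mat 1"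
    by (rule matrix_left_right_inverse1)
  hence "U ** ((transpose V ** A2) ** (G ** A1 ** U)) ** transpose V = X"
    using assms(1) by simp
  thus ?thesis
    using assms(1) by (simp add: matrix_mul_assoc)
qed

lemma low_rank_in_col_space:
  fixes U :: "real^'r^'m" and V :: "real^'r^'n"
    and A1 :: "real^'m^'r" and A2 :: "real^'r^'n"
  assumes "X = U ** transpose V" and "invertible (A1 ** X ** A2)"
  shows "X *v x \<in> col_space (X ** A2)"
    and "transpose X *v y \<in> row_space (A1 ** X)"
proof -
  obtain G where "G ** (A1 ** X ** A2) = mat 1"
    using assms(2) invertible_left_inverse by blast
  with assms(1) have repr: "X ** A2 ** G ** (A1 ** X) = X"
    by (rule low_rank_reproducing)
  have "X *v x = (X ** A2) *v ((G ** (A1 ** X)) *v x)"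
    by (metis repr matrix_mul_assoc matrix_vector_mul_assoc)
  thus "X *v x \<in> col_space (X ** A2)"
    unfolding col_space_def by (metis matrix_vector_mult_in_columnspace)
  have "transpose X *v y = transpose (A1 ** X) *v (transpose (X ** A2 ** G) *v y)"
    by (metis repr matrix_transpose_mul matrix_vector_mul_assoc)
  thus "transpose X *v y \<in> row_space (A1 ** X)"
    unfolding row_space_def by (metis columns_transpose matrix_vector_mult_in_columnspace)
qed

lemma nmf_obj_alt:
  "nmf_obj X A1 A2 l1 l2 U V =
     frob_sq (A1 ** (X - U ** transpose V)) + frob_sq ((X - U ** transpose V) ** A2)
     + l1 * frob_sq ((mat 1 - orth_proj_mat (span (columns (X ** A2)))) ** (U ** transpose V))
     + l2 * frob_sq ((U ** transpose V) ** (mat 1 - orth_proj_mat (span (rows (A1 ** X)))))"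
  unfolding nmf_obj_def Let_def col_space_def row_space_def ..

lemma nmf_obj_nonneg:
  assumes "l1 \<ge> 0" and "l2 \<ge> 0"
  shows "nmf_obj X A1 A2 l1 l2 U V \<ge> 0"
  unfolding nmf_obj_alt using assms by (intro add_nonneg_nonneg mult_nonneg_nonneg frob_sq_nonneg)

lemma nmf_obj_low_rank_factors:
  assumes "X = U ** transpose V" and "invertible (A1 ** X ** A2)"
  shows "nmf_obj X A1 A2 l1 l2 U V = 0"
proof -
  have "(mat 1 - orth_proj_mat (span (columns (X ** A2)))) ** X = 0"
    using low_rank_in_col_space(1)[OF assms] orth_proj_complement_mult_eq_0_iff
    unfolding col_space_def by blast
  moreover have "X ** (mat 1 - orth_proj_mat (span (rows (A1 ** X)))) = 0"
    using low_rank_in_col_space(2)[OF assms] mult_orth_proj_complement_eq_0_iff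
    unfolding row_space_def by blast
  ultimately show ?thesis
    unfolding nmf_obj_alt by (simp flip: assms(1) add: frob_sq_def)
qed

lemma eq_0_if_col_space_and_left_annihilated:
  fixes A1 :: "real^'m^'r" and C :: "real^'r^'m" and D :: "real^'k^'m"
  assumes "invertible (A1 ** C)" and "\<And>x. D *v x \<in> span (columns C)" and "A1 ** D = 0"
  shows "D = 0"
proof -
  have "D *v x = 0" for x
  proof -
    obtain y where y: "D *v x = C *v y"
      using assms(2) span_columns_eq_range by blast
    have "(A1 ** C) *v y = 0"
      using assms(3) by (metis matrix_vector_mul_assoc matrix_vector_mult_0 y)
    hence "y = 0"
      using assms(1) invertible_left_inverse matrix_left_invertible_ker by blast
    thus ?thesis using y by simp
  qed
  thus ?thesis by (simp add: matrix_eq)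
qed

lemma eq_if_nmf_obj_eq_0:
  assumes "l1 > 0" and "l2 \<ge> 0" and "invertible (A1 ** X ** A2)"
    and "\<And>x. X *v x \<in> col_space (X ** A2)"
    and "nmf_obj X A1 A2 l1 l2 U V = 0"
  shows "X = U ** transpose V"
proof -
  define W where "W = U ** transpose V"
  define P1 where "P1 = orth_proj_mat (span (columns (X ** A2)))"
  define P2 where "P2 = orth_proj_mat (span (rows (A1 ** X)))"
  have obj: "frob_sq (A1 ** (X - W)) + frob_sq ((X - W) ** A2)
      + l1 * frob_sq ((mat 1 - P1) ** W) + l2 * frob_sq (W ** (mat 1 - P2)) = 0"
    using assms(5) unfolding nmf_obj_alt W_def P1_def P2_def .
  have "l1 * frob_sq ((mat 1 - P1) ** W) \<ge> 0" "l2 * frob_sq (W ** (mat 1 - P2)) \<ge> 0"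
    using assms(1,2) by (simp_all add: frob_sq_nonneg)
  with obj frob_sq_nonneg[of "A1 ** (X - W)"] frob_sq_nonneg[of "(X - W) ** A2"]
  have "frob_sq (A1 ** (X - W)) = 0" and "l1 * frob_sq ((mat 1 - P1) ** W) = 0"
    by linarith+
  hence annihilated: "A1 ** (X - W) = 0" and "\<And>x. W *v x \<in> span (columns (X ** A2))"
    using assms(1) by (simp_all add: frob_sq_eq_0_iff P1_def orth_proj_complement_mult_eq_0_iff)
  hence "(X - W) *v x \<in> span (columns (X ** A2))" for x
    using assms(4) unfolding col_space_def
    by (simp add: matrix_vector_mult_diff_rdistrib span_diff)
  hence "X - W = 0"
    using assms(3) annihilated
    by (intro eq_0_if_col_space_and_left_annihilated[of A1 "X ** A2"])
       (simp_all add: matrix_mul_assoc)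
  thus ?thesis unfolding W_def by simp
qed

theorem mainTheorem1:
  fixes X :: "real^'n^'m" and U0 :: "real^'r^'m" and V0 :: "real^'r^'n"
    and A1 :: "real^'m^'r" and A2 :: "real^'r^'n"
    and l1 l2 :: real and Ut :: "real^'r^'m" and Vt :: "real^'r^'n"
  assumes "CARD('r) \<le> CARD('m)" and "CARD('r) \<le> CARD('n)"
    and "X = U0 ** transpose V0"
    and "nonneg_mat U0" and "nonneg_mat V0"
    and "rank U0 = CARD('r)" and "rank V0 = CARD('r)"
    and "invertible (A1 ** X ** A2)"
    and "l1 > 0" and "l2 > 0"
    and "nonneg_mat Ut" and "nonneg_mat Vt"
    and "\<forall>U V. nonneg_mat U \<and> nonneg_mat V \<longrightarrow>
           nmf_obj X A1 A2 l1 l2 Ut Vt \<le> nmf_obj X A1 A2 l1 l2 U V"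
  shows "X = Ut ** transpose Vt"
proof -
  have "nmf_obj X A1 A2 l1 l2 Ut Vt \<le> nmf_obj X A1 A2 l1 l2 U0 V0"
    using assms(13) assms(4,5) by simp
  also have "\<dots> = 0"
    using assms(3,8) by (rule nmf_obj_low_rank_factors)
  finally have "nmf_obj X A1 A2 l1 l2 Ut Vt \<le> 0" .
  moreover have "nmf_obj X A1 A2 l1 l2 Ut Vt \<ge> 0"
    using assms(9,10) by (intro nmf_obj_nonneg) simp_all
  ultimately have "nmf_obj X A1 A2 l1 l2 Ut Vt = 0"
    by linarith
  moreover have "X *v x \<in> col_space (X ** A2)" for x
    using assms(3,8) by (rule low_rank_in_col_space(1))
  ultimately show ?thesis
    using assms(8,9,10) by (intro eq_if_nmf_obj_eq_0) simp_all
qed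

end
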